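(* Let $\xi$ be a random vector with support $\Xi\subset\mathbb{R}^l$ and distribution $P$, let $A\in\mathbb{R}^{n\times n}$, and let $B:\mathbb{R}^l\to\mathbb{R}^{n\times m}$, $M:\mathbb{R}^l\to\mathbb{R}^{m\times m}$, $N:\mathbb{R}^l\to\mathbb{R}^{m\times n}$ be continuous. Suppose there is a positive continuous function $\kappa$ with $\mathbb{E}[\kappa(\xi)]<+\infty$ such that for almost every $\xi$, $$\begin{pmatrix} z^T & u^T\end{pmatrix}\begin{pmatrix} A & B(\xi)\\ N(\xi) & M(\xi)\end{pmatrix}\begin{pmatrix} z\\ u\end{pmatrix}\ \ge\ \kappa(\xi)\big(\|z\|^2+\|u\|^2\big)\quad\forall z\in\mathbb{R}^n,\ u\in\mathbb{R}^m. \qquad(\ast)$$ Then the following hold, where in (ii) and (iii) $\xi$ is any point at which $(\ast)$ holds and $J$ is any subset of $\{1,\dots,m\}$: (i) $z^TAz\ge \sup_{\xi\in\Xi}\kappa(\xi)\|z\|^2$ for all $z\in\mathbb{R}^n$, and $u_J^TM_J(\xi)u_J\ge\kappa(\xi)\|u_J\|^2$ for all $u_J\in\mathbb{R}^{|J|}$ and all $J$; (ii) $A-B(\xi)U_J(M(\xi))N(\xi)$ is well defined and $z^T\big(A-B(\xi)U_J(M(\xi))N(\xi)\big)z\ge\kappa(\xi)\|z\|^2$ for all $z\in\mathbb{R}^n$; (iii) $\|M_J(\xi)^{-1}\|\le 1/\kappa(\xi)$ and $\|(A-B(\xi)U_J(M(\xi))N(\xi))^{-1}\|\le 1/\kapp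a(\xi)$.
   Context: $\|\cdot\|$ denotes the Euclidean norm on vectors and the induced 2-norm on matrices. For $J\subseteq\{1,\dots,m\}$, $D_J$ is the $m\times m$ diagonal matrix with $(D_J)_{jj}=1$ if $j\in J$ and $0$ otherwise; for an $m\times m$ matrix $M$ with $z^TMz>0$ for all $z\neq 0$ (not necessarily symmetric), $U_J(M):=(I-D_J(I-M))^{-1}D_J$. Equivalently, after permuting indices so that $J=\{1,\dots,|J|\}$, $U_J(M)=0$ if $J=\emptyset$ and $U_J(M)=\begin{pmatrix} M_J^{-1}&0\\0&0\end{pmatrix}$ otherwise, where $M_J$ is the $|J|\times|J|$ principal submatrix of $M$ indexed by $J$. *)

theory Defs
  imports "HOL-Analysis.Analysis" "HOL-Probability.Probability"
begin

definition measure_support :: "'a::topological_space measure \<Rightarrow> 'a set" where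
  "measure_support P = {x. \<forall>U. open U \<and> x \<in> U \<longrightarrow> emeasure P U > 0}"

text \<open>Condition (*): the block matrix [[A, B(x)],[N(x), M(x)]] is uniformly
positive definite with modulus kappa(x); the quadratic form of the block
matrix at (z,u) is written out blockwise.\<close>
definition block_coercive ::
  "real^'n^'n \<Rightarrow> ('l \<Rightarrow> real^'m^'n) \<Rightarrow> ('l \<Rightarrow> real^'m^'m) \<Rightarrow> ('l \<Rightarrow> real^'n^'m)
   \<Rightarrow> ('l \<Rightarrow> real) \<Rightarrow> 'l \<Rightarrow> bool" where
  "block_coercive A B M N \<kappa> x \<longleftrightarrow>
     (\<forall>(z::real^'n) (u::real^'m).
        z \<bullet> (A *v z) + z \<bullet> (B x *v u) + u \<bullet> (N x *v z) + u \<bullet> (M x *v u)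
          \<ge> \<kappa> x * ((norm z)\<^sup>2 + (norm u)\<^sup>2))"

definition D_J :: "'m::finite set \<Rightarrow> real^'m^'m" where
  "D_J J = (\<chi> i j. if i = j \<and> i \<in> J then 1 else 0)"

definition U_J :: "'m::finite set \<Rightarrow> real^'m^'m \<Rightarrow> real^'m^'m" where
  "U_J J M = matrix_inv (mat 1 - D_J J ** (mat 1 - M)) ** D_J J"

text \<open>Objects living in R^|J|: vectors u_J are functions on J (only values on J
matter), the principal submatrix M_J has entries M i j for i, j in J.\<close>
definition quad_on :: "'m set \<Rightarrow> real^'m^'m \<Rightarrow> ('m \<Rightarrow> real) \<Rightarrow> real" where
  "quad_on J M u = (\<Sum>i\<in>J. \<Sum>j\<in>J. u i * (M $ i $ j) * u j)"

definition vnorm_on :: "'m set \<Rightarrow> ('m \<Rightarrow> real) \<Rightarrow> real" where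
  "vnorm_on J v = sqrt (\<Sum>i\<in>J. (v i)\<^sup>2)"

definition matvec_on :: "'m set \<Rightarrow> ('m \<Rightarrow> 'm \<Rightarrow> real) \<Rightarrow> ('m \<Rightarrow> real) \<Rightarrow> ('m \<Rightarrow> real)" where
  "matvec_on J X v = (\<lambda>i. \<Sum>j\<in>J. X i j * v j)"

definition opnorm_on :: "'m set \<Rightarrow> ('m \<Rightarrow> 'm \<Rightarrow> real) \<Rightarrow> real" where
  "opnorm_on J X = Sup {vnorm_on J (matvec_on J X v) | v. vnorm_on J v \<le> 1}"

definition is_sub_inverse :: "'m set \<Rightarrow> real^'m^'m \<Rightarrow> ('m \<Rightarrow> 'm \<Rightarrow> real) \<Rightarrow> bool" where
  "is_sub_inverse J M X \<longleftrightarrow>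
     (\<forall>i\<in>J. \<forall>j\<in>J. (\<Sum>k\<in>J. (M $ i $ k) * X k j) = (if i = j then 1 else 0)
                  \<and> (\<Sum>k\<in>J. X i k * (M $ k $ j)) = (if i = j then 1 else 0))"

end

theory Submission
  imports Defs
begin

text \<open>
  Setting \<open>u = 0\<close> or \<open>z = 0\<close> in the block condition shows that \<open>A\<close> and \<open>M(\<xi>)\<close> are
  \<open>\<kappa>(\<xi>)\<close>-coercive; the condition defines a closed set of full measure, so it holds on
  the whole support, which gives the bound for \<open>A\<close>. Coercivity passes to principal
  submatrices by padding with zeros, and it makes \<open>I - D\<^sub>J (I - M)\<close> (rows of \<open>M\<close> on \<open>J\<close>,
  rows of \<open>I\<close> elsewhere) invertible. For \<open>u = -U\<^sub>J(M) N z\<close> one has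
  \<open>u\<^sup>T M u = -u\<^sup>T N z\<close>, so the block form at \<open>(z, u)\<close> collapses to the Schur complement
  form \<open>z\<^sup>T (A - B U\<^sub>J(M) N) z\<close>, which is therefore \<open>\<kappa>\<close>-coercive. Finally, a
  \<open>k\<close>-coercive matrix \<open>S\<close> satisfies \<open>k \<parallel>S\<^sup>-\<^sup>1 y\<parallel>\<^sup>2 \<le> \<langle>S\<^sup>-\<^sup>1 y, y\<rangle> \<le> \<parallel>S\<^sup>-\<^sup>1 y\<parallel> \<parallel>y\<parallel>\<close>,
  i.e. \<open>\<parallel>S\<^sup>-\<^sup>1\<parallel> \<le> 1/k\<close>.
\<close>

lemma le_divide_of_mult_square_le:
  fixes k t c :: real
  assumes "0 < k" "0 \<le> t" "0 \<le> c" "k * t\<^sup>2 \<le> t * c"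
  shows "t \<le> c / k"
proof (cases "t = 0")
  case True
  with assms show ?thesis by (simp add: zero_le_mult_iff)
next
  case False
  with assms have "k * t \<le> c" by (simp add: power2_eq_square)
  with assms(1) show ?thesis by (simp add: field_simps)
qed

lemma matrix_inv_right:
  fixes S :: "'a::field^'n^'n"
  assumes "invertible S"
  shows "S ** matrix_inv S = mat 1"
  using assms unfolding invertible_def matrix_inv_def by (metis (mono_tags, lifting) someI_ex)

lemma matrix_inv_left:
  fixes S :: "'a::field^'n^'n"
  assumes "invertible S"
  shows "matrix_inv S ** S = mat 1"
  using assms unfolding invertible_def matrix_inv_def by (metis (mono_tags, lifting) someI_ex)

definition coercive :: "real \<Rightarrow> real^'n^'n \<Rightarrow> bool" where
  "coercive k S \<longleftrightarrow> (\<forall>z. k * (norm z)\<^sup>2 \<le> z \<bullet> (S *v z))"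

lemma coercive_imp_invertible:
  assumes "coercive k S" "0 < k"
  shows "invertible S"
proof -
  have "x = 0" if "S *v x = 0" for x
  proof -
    from assms(1) that have "k * (norm x)\<^sup>2 \<le> 0"
      unfolding coercive_def by (metis inner_zero_right)
    with assms(2) show ?thesis by (simp add: mult_le_0_iff)
  qed
  then show ?thesis
    by (simp add: invertible_left_inverse matrix_left_invertible_ker)
qed

lemma norm_matrix_inv_mult_le:
  assumes "coercive k S" "0 < k"
  shows "norm (matrix_inv S *v y) \<le> norm y / k"
proof -
  define x where "x = matrix_inv S *v y"
  have "S *v x = y"
    unfolding x_def
    using matrix_inv_right[OF coercive_imp_invertible[OF assms]]
    by (simp add: matrix_vector_mul_assoc)
  then have "k * (norm x)\<^sup>2 \<le> x \<bullet> y"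
    using assms(1) unfolding coercive_def by metis
  also have "\<dots> \<le> norm x * norm y"
    by (rule norm_cauchy_schwarz)
  finally show ?thesis
    unfolding x_def[symmetric] using assms(2) by (intro le_divide_of_mult_square_le) auto
qed

lemma onorm_matrix_inv_le:
  assumes "coercive k S" "0 < k"
  shows "onorm (\<lambda>y. matrix_inv S *v y) \<le> 1 / k"
  using norm_matrix_inv_mult_le[OF assms] by (intro onorm_le) simp

definition pad :: "'m set \<Rightarrow> ('m \<Rightarrow> real) \<Rightarrow> real^'m" where
  "pad J u = (\<chi> i. if i \<in> J then u i else 0)"

lemma pad_quadratic_form: "pad J u \<bullet> (M *v pad J u) = quad_on J M u"
proof -
  have "pad J u \<bullet> (M *v pad J u) = (\<Sum>i\<in>J. u i * (\<Sum>j\<in>J. M $ i $ j * u j))"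
    unfolding pad_def inner_vec_def matrix_vector_mult_def
    by (simp add: if_distrib[of "\<lambda>x. _ * x"] if_distrib[of "\<lambda>x. x * _"] sum.If_cases
        cong: if_cong)
  then show ?thesis
    by (simp add: quad_on_def sum_distrib_left mult.assoc)
qed

lemma norm_pad: "norm (pad J u) = vnorm_on J u"
  unfolding pad_def norm_vec_def vnorm_on_def L2_set_def
  by (simp add: if_distrib[of "\<lambda>x. x\<^sup>2"] sum.If_cases cong: if_cong)

lemma coercive_imp_quad_on_ge:
  assumes "coercive k M"
  shows "k * (vnorm_on J u)\<^sup>2 \<le> quad_on J M u"
  using assms unfolding coercive_def by (metis pad_quadratic_form norm_pad)

lemma vnorm_on_nonneg: "0 \<le> vnorm_on J u"
  by (simp add: vnorm_on_def sum_nonneg)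

lemma sub_inverse_right_inverse:
  assumes "is_sub_inverse J M X" "i \<in> J"
  shows "(\<Sum>j\<in>J. M $ i $ j * matvec_on J X v j) = v i"
proof -
  have "(\<Sum>j\<in>J. M $ i $ j * matvec_on J X v j) = (\<Sum>j\<in>J. \<Sum>l\<in>J. M $ i $ j * X j l * v l)"
    unfolding matvec_on_def by (simp add: sum_distrib_left mult.assoc)
  also have "\<dots> = (\<Sum>l\<in>J. (\<Sum>j\<in>J. M $ i $ j * X j l) * v l)"
    by (subst sum.swap) (simp add: sum_distrib_right)
  also have "\<dots> = (\<Sum>l\<in>J. (if i = l then 1 else 0) * v l)"
    using assms unfolding is_sub_inverse_def by (intro sum.cong) auto
  also have "\<dots> = v i"
    using assms(2) by (simp add: if_distrib[of "\<lambda>x. x * _"] cong: if_cong)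
  finally show ?thesis .
qed

lemma opnorm_on_sub_inverse_le:
  assumes coercive: "\<And>u. k * (vnorm_on J u)\<^sup>2 \<le> quad_on J M u"
    and "0 < k" and X: "is_sub_inverse J M X"
  shows "opnorm_on J X \<le> 1 / k"
  unfolding opnorm_on_def
proof (rule cSup_least)
  have "vnorm_on J (\<lambda>_. 0) \<le> 1"
    by (simp add: vnorm_on_def)
  then show "{vnorm_on J (matvec_on J X v) |v. vnorm_on J v \<le> 1} \<noteq> {}"
    by blast
next
  fix r assume "r \<in> {vnorm_on J (matvec_on J X v) |v. vnorm_on J v \<le> 1}"
  then obtain v where r: "r = vnorm_on J (matvec_on J X v)" and v: "vnorm_on J v \<le> 1"
    by blast
  define y where "y = matvec_on J X v"
  have "quad_on J M y = (\<Sum>i\<in>J. y i * v i)"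
    unfolding quad_on_def using sub_inverse_right_inverse[OF X, of _ v]
    by (simp add: y_def mult.assoc sum_distrib_left[symmetric])
  also have "\<dots> \<le> vnorm_on J y * vnorm_on J v"
    using L2_set_mult_ineq[of y v J] sum_mono[of J "\<lambda>i. y i * v i" "\<lambda>i. \<bar>y i\<bar> * \<bar>v i\<bar>"]
    by (simp add: L2_set_def vnorm_on_def abs_mult[symmetric] abs_ge_self)
  also have "\<dots> \<le> vnorm_on J y * 1"
    using v vnorm_on_nonneg by (rule mult_left_mono)
  finally have "k * (vnorm_on J y)\<^sup>2 \<le> vnorm_on J y * 1"
    using coercive[of y] by linarith
  then show "r \<le> 1 / k"
    unfolding r y_def[symmetric] using \<open>0 < k\<close> vnorm_on_nonneg
    by (intro le_divide_of_mult_square_le) auto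
qed

definition replace_rows :: "'m::finite set \<Rightarrow> real^'m^'m \<Rightarrow> real^'m^'m" where
  "replace_rows J M = mat 1 - D_J J ** (mat 1 - M)"

lemma replace_rows_entry:
  "replace_rows J M $ i $ j = (if i \<in> J then M $ i $ j else if i = j then 1 else 0)"
  by (simp add: replace_rows_def D_J_def matrix_matrix_mult_def mat_def
      if_distrib[of "\<lambda>x. x * _"] cong: if_cong)

lemma replace_rows_mult_vec:
  "(replace_rows J M *v v) $ i = (if i \<in> J then (M *v v) $ i else v $ i)"
  unfolding matrix_vector_mult_def vec_lambda_beta replace_rows_entry
  by (simp add: if_distrib[of "\<lambda>x. x * _"] cong: if_cong)

lemma D_J_mult_vec: "(D_J J *v v) $ i = (if i \<in> J then v $ i else 0)"
  by (simp add: matrix_vector_mult_def D_J_def if_distrib[of "\<lambda>x. x * _"] cong: if_cong)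

lemma U_J_eq: "U_J J M = matrix_inv (replace_rows J M) ** D_J J"
  unfolding U_J_def replace_rows_def ..

lemma replace_rows_invertible:
  assumes "coercive k M" "0 < k"
  shows "invertible (replace_rows J M)"
proof -
  have "v = 0" if "replace_rows J M *v v = 0" for v
  proof -
    have "v $ i * (M *v v) $ i = 0" for i
      using arg_cong[OF that, of "\<lambda>w. w $ i"] by (cases "i \<in> J") (auto simp: replace_rows_mult_vec)
    then have "v \<bullet> (M *v v) = 0"
      unfolding inner_vec_def inner_real_def by (simp add: sum.neutral)
    with assms have "k * (norm v)\<^sup>2 \<le> 0"
      unfolding coercive_def by metis
    with assms(2) show ?thesis by (simp add: mult_le_0_iff)
  qed
  then show ?thesis
    by (simp add: invertible_left_inverse matrix_left_invertible_ker)
qed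

lemma is_sub_inverse_replace_rows:
  assumes "invertible (replace_rows J M)"
  shows "is_sub_inverse J M (\<lambda>i j. matrix_inv (replace_rows J M) $ i $ j)"
proof -
  define T where "T = replace_rows J M"
  define V where "V = matrix_inv T"
  have right: "(\<Sum>l\<in>UNIV. T $ i $ l * V $ l $ j) = (if i = j then 1 else 0)" for i j
    using arg_cong[OF matrix_inv_right[OF assms], of "\<lambda>X. X $ i $ j"]
    by (simp add: T_def V_def matrix_matrix_mult_def mat_def)
  have left: "(\<Sum>l\<in>UNIV. V $ i $ l * T $ l $ j) = (if i = j then 1 else 0)" for i j
    using arg_cong[OF matrix_inv_left[OF assms], of "\<lambda>X. X $ i $ j"]
    by (simp add: T_def V_def matrix_matrix_mult_def mat_def)
  \<comment> \<open>Rows of \<open>V\<close> outside \<open>J\<close> are those of the identity, because so are the rows of \<open>T\<close>.\<close>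
  have V_outside: "V $ i $ j = (if i = j then 1 else 0)" if "i \<notin> J" for i j
    using right[of i j] that
    by (simp add: T_def replace_rows_entry if_distrib[of "\<lambda>x. x * _"] cong: if_cong)
  have "(\<Sum>l\<in>J. M $ i $ l * V $ l $ j) = (if i = j then 1 else 0)
        \<and> (\<Sum>l\<in>J. V $ i $ l * M $ l $ j) = (if i = j then 1 else 0)" if "i \<in> J" "j \<in> J" for i j
  proof
    have "(\<Sum>l\<in>UNIV. T $ i $ l * V $ l $ j) = (\<Sum>l\<in>J. M $ i $ l * V $ l $ j)"
      by (rule sum.mono_neutral_cong_right) (use that V_outside in \<open>auto simp: T_def replace_rows_entry\<close>)
    with right show "(\<Sum>l\<in>J. M $ i $ l * V $ l $ j) = (if i = j then 1 else 0)" by simp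
    have "(\<Sum>l\<in>UNIV. V $ i $ l * T $ l $ j) = (\<Sum>l\<in>J. V $ i $ l * M $ l $ j)"
      by (rule sum.mono_neutral_cong_right) (use that in \<open>auto simp: T_def replace_rows_entry\<close>)
    with left show "(\<Sum>l\<in>J. V $ i $ l * M $ l $ j) = (if i = j then 1 else 0)" by simp
  qed
  then show ?thesis
    unfolding is_sub_inverse_def T_def V_def by blast
qed

lemma U_J_complementarity:
  fixes w :: "real^'m::finite"
  assumes "invertible (replace_rows J M)"
  defines "u \<equiv> U_J J M *v w"
  shows "u \<bullet> (M *v u) = u \<bullet> w"
proof -
  have "replace_rows J M *v u = D_J J *v w"
    unfolding u_def U_J_eq
    by (simp add: matrix_vector_mul_assoc matrix_mul_assoc matrix_inv_right[OF assms(1)])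
  \<comment> \<open>On \<open>J\<close> this says \<open>M u = w\<close>; off \<open>J\<close> it says \<open>u = 0\<close>.\<close>
  then have "(if i \<in> J then (M *v u) $ i else u $ i) = (if i \<in> J then w $ i else 0)" for i
    by (metis replace_rows_mult_vec D_J_mult_vec)
  then have "u $ i * (M *v u) $ i = u $ i * w $ i" for i
    by (metis mult_zero_left)
  then show ?thesis
    unfolding inner_vec_def inner_real_def by (rule sum.cong[OF refl])
qed

lemma block_coercive_upper_left:
  assumes "block_coercive A B M N \<kappa> x"
  shows "coercive (\<kappa> x) A"
  unfolding coercive_def
proof
  fix z
  show "\<kappa> x * (norm z)\<^sup>2 \<le> z \<bullet> (A *v z)"
    using assms[unfolded block_coercive_def, rule_format, of z 0] by simp
qed

lemma block_coercive_lower_right: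
  assumes "block_coercive A B M N \<kappa> x"
  shows "coercive (\<kappa> x) (M x)"
  unfolding coercive_def
proof
  fix u
  show "\<kappa> x * (norm u)\<^sup>2 \<le> u \<bullet> (M x *v u)"
    using assms[unfolded block_coercive_def, rule_format, of 0 u] by simp
qed

lemma Schur_complement_coercive:
  fixes A :: "real^'n^'n" and B :: "real^'m^'n" and M :: "real^'m^'m" and N :: "real^'n^'m"
  assumes block: "\<And>z u. k * ((norm z)\<^sup>2 + (norm u)\<^sup>2)
                   \<le> z \<bullet> (A *v z) + z \<bullet> (B *v u) + u \<bullet> (N *v z) + u \<bullet> (M *v u)"
    and "0 \<le> k" and "invertible (replace_rows J M)"
  shows "coercive k (A - B ** U_J J M ** N)"
  unfolding coercive_def
proof
  fix z
  define u where "u = - (U_J J M *v (N *v z))"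
  have "u \<bullet> (M *v u) = - (u \<bullet> (N *v z))"
    using U_J_complementarity[OF assms(3), of "N *v z"] by (simp add: u_def vec.linear_neg)
  moreover have "z \<bullet> (B *v u) = - (z \<bullet> ((B ** U_J J M ** N) *v z))"
    by (simp add: u_def matrix_vector_mul_assoc matrix_mul_assoc vec.linear_neg)
  moreover have "0 \<le> k * (norm u)\<^sup>2"
    using \<open>0 \<le> k\<close> by simp
  ultimately show "k * (norm z)\<^sup>2 \<le> z \<bullet> ((A - B ** U_J J M ** N) *v z)"
    using block[of z u] by (simp add: matrix_vector_mult_diff_rdistrib inner_diff_right algebra_simps)
qed

lemma measure_support_subset_closed:
  fixes P :: "'a::topological_space measure"
  assumes "sets P = sets borel" "closed C" "AE x in P. x \<in> C"
  shows "measure_support P \<subseteq> C"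
proof
  fix x assume x: "x \<in> measure_support P"
  show "x \<in> C"
  proof (rule ccontr)
    assume "x \<notin> C"
    with x assms(2) have "emeasure P (- C) > 0"
      unfolding measure_support_def by blast
    moreover have "emeasure P (- C) = 0"
    proof -
      have "space P = UNIV" "- C \<in> sets P"
        using sets_eq_imp_space_eq[OF assms(1)] assms(1,2) by auto
      then show ?thesis
        using assms(3) by (simp add: AE_iff_measurable[of "- C"] Compl_eq)
    qed
    ultimately show False by simp
  qed
qed

lemma continuous_on_matrix_vector_mult_const [continuous_intros]:
  fixes f :: "'a::topological_space \<Rightarrow> real^'m^'n"
  assumes "continuous_on S f"
  shows "continuous_on S (\<lambda>x. f x *v u)"
proof -
  have "linear (\<lambda>m::real^'m^'n. m *v u)"
    by (rule linearI)
      (simp_all add: vec_eq_iff matrix_vector_mult_def sum.distrib sum_distrib_left algebra_simps)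
  then show ?thesis
    by (intro continuous_on_compose2[OF _ assms, of UNIV] linear_continuous_on)
      (simp_all add: linear_conv_bounded_linear)
qed

lemma closed_block_coercive:
  assumes "continuous_on UNIV B" "continuous_on UNIV M" "continuous_on UNIV N"
    and "continuous_on UNIV \<kappa>"
  shows "closed {x. block_coercive A B M N \<kappa> x}"
proof -
  have "{x. block_coercive A B M N \<kappa> x} = (\<Inter>z. \<Inter>u. {x. \<kappa> x * ((norm z)\<^sup>2 + (norm u)\<^sup>2) \<le>
          z \<bullet> (A *v z) + z \<bullet> (B x *v u) + u \<bullet> (N x *v z) + u \<bullet> (M x *v u)})"
    unfolding block_coercive_def by auto
  also have "closed \<dots>"
    by (intro closed_INT ballI closed_Collect_le continuous_intros assms)
  finally show ?thesis .
qed

lemma SUP_ereal_mult_le: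
  assumes "\<And>x. x \<in> S \<Longrightarrow> f x * c \<le> a" "0 < c"
  shows "(SUP x\<in>S. ereal (f x)) * ereal c \<le> ereal a"
proof -
  have "(SUP x\<in>S. ereal (f x)) \<le> ereal (a / c)"
    using assms by (intro SUP_least) (simp add: pos_le_divide_eq)
  then have "(SUP x\<in>S. ereal (f x)) * ereal c \<le> ereal (a / c) * ereal c"
    by (rule ereal_mult_right_mono) (use assms(2) in simp)
  also have "\<dots> = ereal a"
    using assms(2) by simp
  finally show ?thesis .
qed

theorem lemma2p1:
  fixes P :: "(real^'l) measure"
    and A :: "real^'n^'n"
    and B :: "real^'l \<Rightarrow> real^'m^'n"
    and M :: "real^'l \<Rightarrow> real^'m^'m"
    and N :: "real^'l \<Rightarrow> real^'n^'m"
    and \<kappa> :: "real^'l \<Rightarrow> real"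
  assumes "prob_space P"
    and "sets P = sets borel"
    and "continuous_on UNIV B" and "continuous_on UNIV M" and "continuous_on UNIV N"
    and "continuous_on UNIV \<kappa>" and "\<forall>x. \<kappa> x > 0"
    and "(\<integral>\<^sup>+ x. ennreal (\<kappa> x) \<partial>P) < \<infinity>"
    and "AE x in P. block_coercive A B M N \<kappa> x"
  shows "(\<forall>z::real^'n. (SUP x\<in>measure_support P. ereal (\<kappa> x)) * ereal ((norm z)\<^sup>2)
                         \<le> ereal (z \<bullet> (A *v z)))
       \<and> (\<forall>x. block_coercive A B M N \<kappa> x \<longrightarrow>
           (\<forall>J::'m set.
              (\<forall>u. quad_on J (M x) u \<ge> \<kappa> x * (vnorm_on J u)\<^sup>2)
            \<and> invertible (mat 1 - D_J J ** (mat 1 - M x))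
            \<and> (\<forall>z::real^'n. z \<bullet> ((A - B x ** U_J J (M x) ** N x) *v z) \<ge> \<kappa> x * (norm z)\<^sup>2)
            \<and> (\<exists>X. is_sub_inverse J (M x) X)
            \<and> (\<forall>X. is_sub_inverse J (M x) X \<longrightarrow> opnorm_on J X \<le> 1 / \<kappa> x)
            \<and> invertible (A - B x ** U_J J (M x) ** N x)
            \<and> onorm (\<lambda>z. matrix_inv (A - B x ** U_J J (M x) ** N x) *v z) \<le> 1 / \<kappa> x))"
proof (intro conjI allI impI)
  fix z :: "real^'n"
  have "measure_support P \<subseteq> {x. block_coercive A B M N \<kappa> x}"
    using measure_support_subset_closed[OF assms(2) closed_block_coercive[OF assms(3-6)]] assms(9)
    by simp
  then have "\<kappa> x * (norm z)\<^sup>2 \<le> z \<bullet> (A *v z)" if "x \<in> measure_support P" for x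
    using that block_coercive_upper_left[of A B M N \<kappa> x] unfolding coercive_def by blast
  then show "(SUP x\<in>measure_support P. ereal (\<kappa> x)) * ereal ((norm z)\<^sup>2) \<le> ereal (z \<bullet> (A *v z))"
    by (cases "z = 0") (auto intro: SUP_ereal_mult_le simp: zero_ereal_def[symmetric])
next
  fix x J assume block: "block_coercive A B M N \<kappa> x"
  have k: "0 < \<kappa> x"
    using assms(7) by blast
  from block have M_coercive: "coercive (\<kappa> x) (M x)"
    by (rule block_coercive_lower_right)
  then show "\<kappa> x * (vnorm_on J u)\<^sup>2 \<le> quad_on J (M x) u" for u
    by (rule coercive_imp_quad_on_ge)
  show T_invertible: "invertible (mat 1 - D_J J ** (mat 1 - M x))"
    using replace_rows_invertible[OF M_coercive k] unfolding replace_rows_def .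
  then show "\<exists>X. is_sub_inverse J (M x) X"
    using is_sub_inverse_replace_rows unfolding replace_rows_def by blast
  show "opnorm_on J X \<le> 1 / \<kappa> x" if "is_sub_inverse J (M x) X" for X
    using opnorm_on_sub_inverse_le[OF coercive_imp_quad_on_ge[OF M_coercive] k that] .
  have Schur_coercive: "coercive (\<kappa> x) (A - B x ** U_J J (M x) ** N x)"
    using block k T_invertible unfolding block_coercive_def replace_rows_def[symmetric]
    by (intro Schur_complement_coercive) auto
  then show "\<kappa> x * (norm z)\<^sup>2 \<le> z \<bullet> ((A - B x ** U_J J (M x) ** N x) *v z)" for z
    unfolding coercive_def by blast
  show "invertible (A - B x ** U_J J (M x) ** N x)"
    using coercive_imp_invertible[OF Schur_coercive k] .
  show "onorm (\<lambda>z. matrix_inv (A - B x ** U_J J (M x) ** N x) *v z) \<le> 1 / \<kappa> x"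
    using onorm_matrix_inv_le[OF Schur_coercive k] .
qed

end
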